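(* Let $\delta,D\ge0$ and let $(X_n,x_n,\Gamma_n)\in\mathcal{M}(\delta,D)$ converge in the equivariant pointed Gromov–Hausdorff sense to $(X_\infty,x_\infty,\Gamma_\infty)$, with $X_\infty$ proper and $\Gamma_\infty$ closed in $\mathrm{Isom}(X_\infty)$. Let $Y_n=\mathrm{QC\text{-}Hull}(\Lambda(\Gamma_n))$. Then for every $0<r\le R$, $\sup_{n\in\mathbb N}\mathrm{Pack}_{Y_n}(R,r)<+\infty$.
   Context: For $Z$ a subset of a metric space, $\mathrm{Pack}(Z,r)$ is the maximal cardinality of a $2r$-separated subset of $Z$; for $Y\subseteq X$, $\mathrm{Pack}_Y(R,r)=\sup_{y\in Y}\mathrm{Pack}(\overline B(y,R)\cap Y,r)$. Gromov product $(y,z)_x=\frac12(d(x,y)+d(x,z)-d(y,z))$; $X$ is $\delta$-hyperbolic if $(x,z)_w\geq\min\{(x,y)_w,(y,z)_w\}-\delta$ for all points. $\Lambda(\Gamma)$: accumulation points in the Gromov boundary of $\Gamma x$; elementary means $\#\Lambda(\Gamma)\le2$. $\mathrm{QC\text{-}Hull}(C)$: union of geodesic lines with both endpoints in $C$. Quasiconvex-cocompact with codiameter $\le D$: for all $y,y'\in\mathrm{QC\text{-}Hull}(\Lambda(\Gamma))$ there is $g\in\Gamma$ with $d(gy,y')\le D$. $\mathcal{M}(\delta,D)$: triples $(X,x,\Gamma)$, $X$ proper geodesic $\delta$-hyperbolic, $\Gamma\le\mathrm{Isom}(X)$ discrete, torsion-free, non-elementary, quasiconvex-cocompact with codiameter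 $\le D$, $x\in\mathrm{QC\text{-}Hull}(\Lambda(\Gamma))$. Equivariant pointed Gromov–Hausdorff convergence: with $\Sigma_R(\Gamma,x)=\{g\in\Gamma:d(x,gx)\le R\}$, an equivariant $\varepsilon$-approximation between $(X,x,\Gamma)$ and $(Y,y,\Lambda)$ is $(f,\varphi,\psi)$ with $f:B(x,1/\varepsilon)\to B(y,1/\varepsilon)$, $f(x)=y$, $|d(f(a),f(b))-d(a,b)|<\varepsilon$, image $\varepsilon$-dense in $B(y,1/\varepsilon)$; $\varphi:\Sigma_{1/\varepsilon}(\Gamma,x)\to\Sigma_{1/\varepsilon}(\Lambda,y)$ with $d(f(ga),\varphi(g)f(a))<\varepsilon$ whenever $a,ga\in B(x,1/\varepsilon)$; $\psi:\Sigma_{1/\varepsilon}(\Lambda,y)\to\Sigma_{1/\varepsilon}(\Gamma,x)$ with $d(f(\psi(g)a),gf(a))<\varepsilon$ whenever $a,\psi(g)a\in B(x,1/\varepsilon)$. Convergence means that for every $\varepsilon>0$ such approximations exist for all large $n$. *)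

theory Defs
  imports "HOL-Analysis.Analysis" "HOL-Library.Extended_Nat"
begin

definition proper_space :: "'a metric \<Rightarrow> bool" where
  "proper_space X \<longleftrightarrow>
     (\<forall>x\<in>mspace X. \<forall>r. compactin (mtopology_of X) (mcball_of X x r))"

definition geodesic_space :: "'a metric \<Rightarrow> bool" where
  "geodesic_space X \<longleftrightarrow>
     (\<forall>a\<in>mspace X. \<forall>b\<in>mspace X. \<exists>\<gamma>::real \<Rightarrow> 'a.
        \<gamma> 0 = a \<and> \<gamma> (mdist X a b) = b \<and>
        (\<forall>t\<in>{0..mdist X a b}. \<gamma> t \<in> mspace X) \<and>
        (\<forall>s\<in>{0..mdist X a b}. \<forall>t\<in>{0..mdist X a b}. mdist X (\<gamma> s) (\<gamma> t) = \<bar>s - t\<bar>))"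

definition gromov_product :: "'a metric \<Rightarrow> 'a \<Rightarrow> 'a \<Rightarrow> 'a \<Rightarrow> real" where
  "gromov_product X y z x = (mdist X x y + mdist X x z - mdist X y z) / 2"

definition hyperbolic :: "'a metric \<Rightarrow> real \<Rightarrow> bool" where
  "hyperbolic X \<delta> \<longleftrightarrow>
     (\<forall>x\<in>mspace X. \<forall>y\<in>mspace X. \<forall>z\<in>mspace X. \<forall>w\<in>mspace X.
        gromov_product X x z w \<ge> min (gromov_product X x y w) (gromov_product X y z w) - \<delta>)"

text \<open>Isometries of X: distance-preserving bijections of the carrier, normalised to be the
  identity outside the carrier (so that they are determined by their action on X).\<close>
definition Isom :: "'a metric \<Rightarrow> ('a \<Rightarrow> 'a) set" where
  "Isom X = {g. bij_betw g (mspace X) (mspace X) \<and>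
                (\<forall>a\<in>mspace X. \<forall>b\<in>mspace X. mdist X (g a) (g b) = mdist X a b) \<and>
                (\<forall>a. a \<notin> mspace X \<longrightarrow> g a = a)}"

definition isom_subgroup :: "'a metric \<Rightarrow> ('a \<Rightarrow> 'a) set \<Rightarrow> bool" where
  "isom_subgroup X G \<longleftrightarrow> G \<subseteq> Isom X \<and> id \<in> G \<and>
     (\<forall>g\<in>G. \<forall>h\<in>G. g \<circ> h \<in> G) \<and> (\<forall>g\<in>G. inv g \<in> G)"

text \<open>Topology of Isom(X): compact-open topology, which for metric spaces is the topology of
  uniform convergence on compact sets. Basic neighbourhoods of f: {h. sup over K of d(h y, f y) < e}.\<close>
definition isom_nbhd :: "'a metric \<Rightarrow> ('a \<Rightarrow> 'a) \<Rightarrow> 'a set \<Rightarrow> real \<Rightarrow> ('a \<Rightarrow> 'a) set" where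
  "isom_nbhd X f K e = {h \<in> Isom X. \<exists>e'<e. \<forall>y\<in>K. mdist X (h y) (f y) \<le> e'}"

definition discrete_subgroup :: "'a metric \<Rightarrow> ('a \<Rightarrow> 'a) set \<Rightarrow> bool" where
  "discrete_subgroup X G \<longleftrightarrow>
     (\<forall>g\<in>G. \<exists>K e. K \<subseteq> mspace X \<and> compactin (mtopology_of X) K \<and> e > 0 \<and>
        G \<inter> isom_nbhd X g K e = {g})"

definition closed_subgroup :: "'a metric \<Rightarrow> ('a \<Rightarrow> 'a) set \<Rightarrow> bool" where
  "closed_subgroup X G \<longleftrightarrow>
     (\<forall>f\<in>Isom X. (\<forall>K e. K \<subseteq> mspace X \<and> compactin (mtopology_of X) K \<and> e > 0 \<longrightarrow>
         G \<inter> isom_nbhd X f K e \<noteq> {}) \<longrightarrow> f \<in> G)"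

definition torsion_free :: "('a \<Rightarrow> 'a) set \<Rightarrow> bool" where
  "torsion_free G \<longleftrightarrow> (\<forall>g\<in>G. \<forall>n::nat. n \<ge> 1 \<and> g ^^ n = id \<longrightarrow> g = id)"

definition gromov_seq :: "'a metric \<Rightarrow> (nat \<Rightarrow> 'a) \<Rightarrow> bool" where
  "gromov_seq X z \<longleftrightarrow> (\<forall>i. z i \<in> mspace X) \<and>
     (\<forall>w\<in>mspace X. \<forall>M::real. \<exists>N. \<forall>i\<ge>N. \<forall>j\<ge>N. gromov_product X (z i) (z j) w \<ge> M)"

definition gromov_equiv :: "'a metric \<Rightarrow> (nat \<Rightarrow> 'a) \<Rightarrow> (nat \<Rightarrow> 'a) \<Rightarrow> bool" where
  "gromov_equiv X z z' \<longleftrightarrow>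
     (\<forall>w\<in>mspace X. \<forall>M::real. \<exists>N. \<forall>i\<ge>N. \<forall>j\<ge>N. gromov_product X (z i) (z' j) w \<ge> M)"

definition gromov_boundary :: "'a metric \<Rightarrow> (nat \<Rightarrow> 'a) set set" where
  "gromov_boundary X =
     {{z'. gromov_seq X z' \<and> gromov_equiv X z z'} | z. gromov_seq X z}"

definition limit_set :: "'a metric \<Rightarrow> 'a \<Rightarrow> ('a \<Rightarrow> 'a) set \<Rightarrow> (nat \<Rightarrow> 'a) set set" where
  "limit_set X x G = {\<xi> \<in> gromov_boundary X. \<exists>g. (\<forall>i. g i \<in> G) \<and> (\<lambda>i. g i x) \<in> \<xi>}"

definition non_elementary :: "'a metric \<Rightarrow> 'a \<Rightarrow> ('a \<Rightarrow> 'a) set \<Rightarrow> bool" where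
  "non_elementary X x G \<longleftrightarrow> \<not> (finite (limit_set X x G) \<and> card (limit_set X x G) \<le> 2)"

definition geodesic_line :: "'a metric \<Rightarrow> (real \<Rightarrow> 'a) \<Rightarrow> bool" where
  "geodesic_line X \<gamma> \<longleftrightarrow> (\<forall>t. \<gamma> t \<in> mspace X) \<and>
     (\<forall>s t. mdist X (\<gamma> s) (\<gamma> t) = \<bar>s - t\<bar>)"

definition QC_Hull :: "'a metric \<Rightarrow> (nat \<Rightarrow> 'a) set set \<Rightarrow> 'a set" where
  "QC_Hull X C = (\<Union>{range \<gamma> | \<gamma>. geodesic_line X \<gamma> \<and>
       (\<exists>\<xi>\<in>C. (\<lambda>n. \<gamma> (real n)) \<in> \<xi>) \<and> (\<exists>\<eta>\<in>C. (\<lambda>n. \<gamma> (- real n)) \<in> \<eta>)})"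

definition qc_cocompact :: "'a metric \<Rightarrow> 'a \<Rightarrow> ('a \<Rightarrow> 'a) set \<Rightarrow> real \<Rightarrow> bool" where
  "qc_cocompact X x G D \<longleftrightarrow>
     (\<forall>y\<in>QC_Hull X (limit_set X x G). \<forall>y'\<in>QC_Hull X (limit_set X x G).
        \<exists>g\<in>G. mdist X (g y) y' \<le> D)"

definition in_M :: "real \<Rightarrow> real \<Rightarrow> 'a metric \<Rightarrow> 'a \<Rightarrow> ('a \<Rightarrow> 'a) set \<Rightarrow> bool" where
  "in_M \<delta> D X x G \<longleftrightarrow>
     proper_space X \<and> geodesic_space X \<and> hyperbolic X \<delta> \<and>
     isom_subgroup X G \<and> discrete_subgroup X G \<and> torsion_free G \<and>
     non_elementary X x G \<and> qc_cocompact X x G D \<and>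
     x \<in> QC_Hull X (limit_set X x G)"

definition Sigma_R :: "'a metric \<Rightarrow> ('a \<Rightarrow> 'a) set \<Rightarrow> 'a \<Rightarrow> real \<Rightarrow> ('a \<Rightarrow> 'a) set" where
  "Sigma_R X G x R = {g \<in> G. mdist X x (g x) \<le> R}"

definition equiv_approx ::
  "real \<Rightarrow> 'a metric \<Rightarrow> 'a \<Rightarrow> ('a \<Rightarrow> 'a) set \<Rightarrow> 'b metric \<Rightarrow> 'b \<Rightarrow> ('b \<Rightarrow> 'b) set \<Rightarrow>
   ('a \<Rightarrow> 'b) \<Rightarrow> (('a \<Rightarrow> 'a) \<Rightarrow> ('b \<Rightarrow> 'b)) \<Rightarrow> (('b \<Rightarrow> 'b) \<Rightarrow> ('a \<Rightarrow> 'a)) \<Rightarrow> bool" where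
  "equiv_approx \<epsilon> X x G Y y H f \<phi> \<psi> \<longleftrightarrow>
     f ` mball_of X x (1/\<epsilon>) \<subseteq> mball_of Y y (1/\<epsilon>) \<and> f x = y \<and>
     (\<forall>a\<in>mball_of X x (1/\<epsilon>). \<forall>b\<in>mball_of X x (1/\<epsilon>).
        \<bar>mdist Y (f a) (f b) - mdist X a b\<bar> < \<epsilon>) \<and>
     (\<forall>z\<in>mball_of Y y (1/\<epsilon>). \<exists>a\<in>mball_of X x (1/\<epsilon>). mdist Y (f a) z < \<epsilon>) \<and>
     \<phi> ` Sigma_R X G x (1/\<epsilon>) \<subseteq> Sigma_R Y H y (1/\<epsilon>) \<and>
     (\<forall>g\<in>Sigma_R X G x (1/\<epsilon>). \<forall>a\<in>mball_of X x (1/\<epsilon>).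
        g a \<in> mball_of X x (1/\<epsilon>) \<longrightarrow> mdist Y (f (g a)) (\<phi> g (f a)) < \<epsilon>) \<and>
     \<psi> ` Sigma_R Y H y (1/\<epsilon>) \<subseteq> Sigma_R X G x (1/\<epsilon>) \<and>
     (\<forall>g\<in>Sigma_R Y H y (1/\<epsilon>). \<forall>a\<in>mball_of X x (1/\<epsilon>).
        \<psi> g a \<in> mball_of X x (1/\<epsilon>) \<longrightarrow> mdist Y (f (\<psi> g a)) (g (f a)) < \<epsilon>)"

definition equiv_pGH_converges ::
  "(nat \<Rightarrow> 'a metric) \<Rightarrow> (nat \<Rightarrow> 'a) \<Rightarrow> (nat \<Rightarrow> ('a \<Rightarrow> 'a) set) \<Rightarrow>
   'b metric \<Rightarrow> 'b \<Rightarrow> ('b \<Rightarrow> 'b) set \<Rightarrow> bool" where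
  "equiv_pGH_converges X x G Y y H \<longleftrightarrow>
     (\<forall>\<epsilon>>0. \<exists>N. \<forall>n\<ge>N. \<exists>f \<phi> \<psi>. equiv_approx \<epsilon> (X n) (x n) (G n) Y y H f \<phi> \<psi>)"

definition Pack :: "'a metric \<Rightarrow> 'a set \<Rightarrow> real \<Rightarrow> enat" where
  "Pack X Z r = Sup {enat (card S) | S. finite S \<and> S \<subseteq> Z \<and>
       (\<forall>a\<in>S. \<forall>b\<in>S. a \<noteq> b \<longrightarrow> mdist X a b > 2 * r)}"

definition Pack_in :: "'a metric \<Rightarrow> 'a set \<Rightarrow> real \<Rightarrow> real \<Rightarrow> enat" where
  "Pack_in X Y R r = (SUP y\<in>Y. Pack X (mcball_of X y R \<inter> Y) r)"

end

theory Submission imports Defs begin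

text \<open>Cocompactness moves any packing of a ball in the hull, by an element of the group, into the
  ball of radius R + D around the basepoint, so it suffices to bound packings of these balls. For
  large n an equivariant approximation maps a 2r-separated subset of such a ball injectively onto an
  r-separated subset of one fixed closed ball of the proper limit space, whose packing number at
  scale r/2 is finite by total boundedness. The finitely many remaining terms are finite because
  each space is proper.\<close>

definition separated :: "'a metric \<Rightarrow> real \<Rightarrow> 'a set \<Rightarrow> bool" where
  "separated m e S \<longleftrightarrow> (\<forall>a\<in>S. \<forall>b\<in>S. a \<noteq> b \<longrightarrow> mdist m a b > e)"

lemma mdist_self: "x \<in> mspace m \<Longrightarrow> mdist m x x = 0"
  by simp

lemma Pack_eq: "Pack m Z r = Sup {enat (card S) | S. finite S \<and> S \<subseteq> Z \<and> separated m (2 * r) S}"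
  unfolding Pack_def separated_def ..

lemma Pack_le_enatI:
  assumes "\<And>S. finite S \<Longrightarrow> S \<subseteq> Z \<Longrightarrow> separated m (2 * r) S \<Longrightarrow> card S \<le> M"
  shows "Pack m Z r \<le> enat M"
  unfolding Pack_eq by (rule Sup_least) (use assms in auto)

lemma compactin_separated_card_bounded:
  assumes "compactin (mtopology_of m) K" "e > 0"
  obtains M where "\<And>S. finite S \<Longrightarrow> S \<subseteq> K \<Longrightarrow> separated m e S \<Longrightarrow> card S \<le> M"
proof -
  have "Metric_space.mtotally_bounded (mspace m) (mdist m) K"
    using assms(1) Metric_space.compactin_imp_mtotally_bounded[OF Metric_space_mspace_mdist]
    by (simp add: mtopology_of_def)
  then obtain C where C: "finite C" "K \<subseteq> (\<Union>c\<in>C. mball_of m c (e/2))"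
    using \<open>e > 0\<close> unfolding Metric_space.mtotally_bounded_def[OF Metric_space_mspace_mdist] mball_of_def
    by (meson half_gt_zero)
  have "\<forall>a\<in>K. \<exists>c. c \<in> C \<and> a \<in> mball_of m c (e/2)" using C(2) by blast
  then obtain h where h: "\<And>a. a \<in> K \<Longrightarrow> h a \<in> C \<and> a \<in> mball_of m (h a) (e/2)"
    using bchoice by metis
  have "card S \<le> card C" if S: "finite S" "S \<subseteq> K" "separated m e S" for S
  proof -
    \<comment> \<open>two points of S in the same ball of radius e/2 would be at distance less than e\<close>
    have "inj_on h S"
    proof (rule inj_onI, rule ccontr)
      fix a b assume ab: "a \<in> S" "b \<in> S" "h a = h b" "a \<noteq> b"
      then have "a \<in> K" "b \<in> K" using S by auto
      then have "mdist m a b \<le> mdist m a (h a) + mdist m (h a) b"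
        using h by (intro mdist_triangle) auto
      also have "\<dots> < e"
        using h[OF \<open>a \<in> K\<close>] h[OF \<open>b \<in> K\<close>] ab(3) by (simp add: mdist_commute)
      finally show False using S ab unfolding separated_def by force
    qed
    then have "card S = card (h ` S)" by (simp add: card_image)
    also have "\<dots> \<le> card C" using h S C by (intro card_mono) auto
    finally show ?thesis .
  qed
  then show thesis using that by blast
qed

lemma Pack_compactin_finite:
  assumes "compactin (mtopology_of m) K" "r > 0"
  shows "Pack m K r < \<infinity>"
proof -
  obtain M where "\<And>S. finite S \<Longrightarrow> S \<subseteq> K \<Longrightarrow> separated m (2 * r) S \<Longrightarrow> card S \<le> M"
    using compactin_separated_card_bounded[OF assms(1), of "2 * r"] assms(2) by auto
  then have "Pack m K r \<le> enat M" by (rule Pack_le_enatI)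
  then show ?thesis using le_less_trans by fastforce
qed

text \<open>Nonnegativity of r' makes h injective on separated sets.\<close>
lemma Pack_le_Pack_map:
  assumes "h ` Z \<subseteq> Z'" "Z' \<subseteq> mspace m'" "r' \<ge> 0"
    and "\<And>a b. a \<in> Z \<Longrightarrow> b \<in> Z \<Longrightarrow> mdist m a b > 2 * r \<Longrightarrow> mdist m' (h a) (h b) > 2 * r'"
  shows "Pack m Z r \<le> Pack m' Z' r'"
  unfolding Pack_eq
proof (rule Sup_least, clarify)
  fix S assume S: "finite S" "S \<subseteq> Z" "separated m (2 * r) S"
  have sep: "mdist m' (h a) (h b) > 2 * r'" if "a \<in> S" "b \<in> S" "a \<noteq> b" for a b
    using S that assms(4) unfolding separated_def by blast
  have "inj_on h S"
  proof (rule inj_onI, rule ccontr)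
    fix a b assume "a \<in> S" "b \<in> S" "h a = h b" "a \<noteq> b"
    moreover have "h b \<in> mspace m'" using assms(1,2) S \<open>b \<in> S\<close> by blast
    ultimately show False using sep[of a b] assms(3) mdist_self[of "h b" m'] by simp
  qed
  then have "enat (card S) = enat (card (h ` S))" by (simp add: card_image)
  also have "\<dots> \<le> Sup {enat (card S) | S. finite S \<and> S \<subseteq> Z' \<and> separated m' (2 * r') S}"
  proof (rule Sup_upper, intro CollectI exI conjI)
    show "finite (h ` S)" "h ` S \<subseteq> Z'" using S assms(1) by auto
    show "separated m' (2 * r') (h ` S)" using sep unfolding separated_def by blast
  qed (rule refl)
  finally show "enat (card S) \<le> \<dots>" .
qed

lemma QC_Hull_subset_mspace: "QC_Hull X C \<subseteq> mspace X"
  unfolding QC_Hull_def geodesic_line_def by auto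

lemma Pack_in_QC_Hull_le_Pack_mcball:
  assumes G: "isom_subgroup m G" and cc: "qc_cocompact m x G D"
    and xY: "x \<in> QC_Hull m (limit_set m x G)" and "r \<ge> 0"
  shows "Pack_in m (QC_Hull m (limit_set m x G)) R r \<le> Pack m (mcball_of m x (R + D)) r"
  unfolding Pack_in_def
proof (rule SUP_least)
  let ?Y = "QC_Hull m (limit_set m x G)"
  fix y assume y: "y \<in> ?Y"
  obtain g where g: "g \<in> G" "mdist m (g y) x \<le> D"
    using cc y xY unfolding qc_cocompact_def by blast
  have "g \<in> Isom m" using G g unfolding isom_subgroup_def by blast
  then have gm: "\<And>a. a \<in> mspace m \<Longrightarrow> g a \<in> mspace m"
    and dist: "\<And>a b. a \<in> mspace m \<Longrightarrow> b \<in> mspace m \<Longrightarrow> mdist m (g a) (g b) = mdist m a b"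
    unfolding Isom_def bij_betw_def by auto
  have ym: "y \<in> mspace m" and xm: "x \<in> mspace m"
    using y xY QC_Hull_subset_mspace[of m] by auto
  have maps: "g ` (mcball_of m y R \<inter> ?Y) \<subseteq> mcball_of m x (R + D)"
  proof clarify
    fix a assume a: "a \<in> mcball_of m y R" "a \<in> ?Y"
    then have am: "a \<in> mspace m" by simp
    have "mdist m x (g a) \<le> mdist m x (g y) + mdist m (g y) (g a)"
      using xm gm am ym by (intro mdist_triangle) auto
    also have "\<dots> \<le> D + R" using g dist[OF ym am] a by (auto simp: mdist_commute)
    finally show "g a \<in> mcball_of m x (R + D)" using xm gm[OF am] by simp
  qed
  show "Pack m (mcball_of m y R \<inter> ?Y) r \<le> Pack m (mcball_of m x (R + D)) r"
  proof (rule Pack_le_Pack_map[OF maps _ \<open>r \<ge> 0\<close>])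
    fix a b assume "a \<in> mcball_of m y R \<inter> ?Y" "b \<in> mcball_of m y R \<inter> ?Y" "mdist m a b > 2 * r"
    then show "mdist m (g a) (g b) > 2 * r" using dist by simp
  qed auto
qed

lemma equiv_approx_basepoint_in_mspace:
  assumes "equiv_approx \<epsilon> X x G Y y H f \<phi> \<psi>" "x \<in> mspace X" "\<epsilon> > 0"
  shows "y \<in> mspace Y"
proof -
  have "x \<in> mball_of X x (1/\<epsilon>)" using assms(2,3) mdist_self[of x X] by (simp del: mdist_zero)
  then show ?thesis using assms(1) unfolding equiv_approx_def by (metis image_subset_iff in_mball_of)
qed

lemma equiv_approx_Pack_mcball_le:
  assumes E: "equiv_approx \<epsilon> X x G Y y H f \<phi> \<psi>" and "\<rho> < 1/\<epsilon>" and "\<epsilon> \<le> 2 * r"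
  shows "Pack X (mcball_of X x \<rho>) r \<le> Pack Y (mcball_of Y y (1/\<epsilon>)) (r - \<epsilon>/2)"
proof -
  have fB: "f ` mball_of X x (1/\<epsilon>) \<subseteq> mball_of Y y (1/\<epsilon>)"
    using E unfolding equiv_approx_def by (elim conjE)
  have fd: "\<forall>a\<in>mball_of X x (1/\<epsilon>). \<forall>b\<in>mball_of X x (1/\<epsilon>).
               \<bar>mdist Y (f a) (f b) - mdist X a b\<bar> < \<epsilon>"
    using E unfolding equiv_approx_def by (elim conjE)
  have ball: "mcball_of X x \<rho> \<subseteq> mball_of X x (1/\<epsilon>)" using \<open>\<rho> < 1/\<epsilon>\<close> by auto
  show ?thesis
  proof (rule Pack_le_Pack_map)
    show "f ` mcball_of X x \<rho> \<subseteq> mcball_of Y y (1/\<epsilon>)" using fB ball by force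
    fix a b assume "a \<in> mcball_of X x \<rho>" "b \<in> mcball_of X x \<rho>" "mdist X a b > 2 * r"
    moreover have "\<bar>mdist Y (f a) (f b) - mdist X a b\<bar> < \<epsilon>"
      using fd ball calculation(1,2) by blast
    ultimately show "mdist Y (f a) (f b) > 2 * (r - \<epsilon>/2)" by (simp add: abs_less_iff)
  qed (use \<open>\<epsilon> \<le> 2 * r\<close> in auto)
qed

lemma SUP_enat_finite_if_eventually_bounded:
  fixes p :: "nat \<Rightarrow> enat"
  assumes "\<And>n. p n < \<infinity>" and "\<And>n. n \<ge> N \<Longrightarrow> p n \<le> C" and "C < \<infinity>"
  shows "(SUP n. p n) < \<infinity>"
proof -
  have "(SUP n. p n) \<le> Max (insert C (p ` {..<N}))"
  proof (rule SUP_least)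
    fix n show "p n \<le> Max (insert C (p ` {..<N}))"
      using assms(2)[of n] by (cases "n \<ge> N") (auto intro: order_trans[OF _ Max_ge])
  qed
  also have "\<dots> < \<infinity>" using Max_in[of "insert C (p ` {..<N})"] assms(1,3) by auto
  finally show ?thesis .
qed

lemma equiv_pGH_converges_Pack_mcball_eventually_bounded:
  assumes conv: "equiv_pGH_converges X x \<Gamma> Xinf xinf \<Gamma>inf" and "proper_space Xinf"
    and xm: "\<And>n. x n \<in> mspace (X n)" and "r > 0"
  obtains N C where "C < \<infinity>" "\<And>n. n \<ge> N \<Longrightarrow> Pack (X n) (mcball_of (X n) (x n) \<rho>) r \<le> C"
proof -
  define \<epsilon> where "\<epsilon> = min r (1 / (max \<rho> 0 + 1))"
  have \<epsilon>: "\<epsilon> > 0" "\<epsilon> \<le> r" using \<open>r > 0\<close> by (auto simp: \<epsilon>_def)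
  have "1 / (1 / (max \<rho> 0 + 1)) \<le> 1 / \<epsilon>"
    using \<epsilon>(1) by (intro divide_left_mono) (auto simp: \<epsilon>_def)
  then have \<epsilon>_ball: "\<rho> < 1/\<epsilon>" by simp
  obtain N where N: "\<And>n. n \<ge> N \<Longrightarrow> \<exists>f \<phi> \<psi>. equiv_approx \<epsilon> (X n) (x n) (\<Gamma> n) Xinf xinf \<Gamma>inf f \<phi> \<psi>"
    using conv \<epsilon>(1) unfolding equiv_pGH_converges_def by blast
  obtain f \<phi> \<psi> where "equiv_approx \<epsilon> (X N) (x N) (\<Gamma> N) Xinf xinf \<Gamma>inf f \<phi> \<psi>"
    using N by blast
  then have "xinf \<in> mspace Xinf" using xm \<epsilon>(1) by (rule equiv_approx_basepoint_in_mspace)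
  then have "Pack Xinf (mcball_of Xinf xinf (1/\<epsilon>)) (r - \<epsilon>/2) < \<infinity>"
    using \<open>proper_space Xinf\<close> \<epsilon> by (intro Pack_compactin_finite) (auto simp: proper_space_def)
  moreover have "Pack (X n) (mcball_of (X n) (x n) \<rho>) r \<le> Pack Xinf (mcball_of Xinf xinf (1/\<epsilon>)) (r - \<epsilon>/2)"
    if late: "n \<ge> N" for n
  proof -
    obtain f \<phi> \<psi> where "equiv_approx \<epsilon> (X n) (x n) (\<Gamma> n) Xinf xinf \<Gamma>inf f \<phi> \<psi>"
      using N[OF late] by blast
    then show ?thesis using \<epsilon> \<epsilon>_ball by (intro equiv_approx_Pack_mcball_le) auto
  qed
  ultimately show thesis using that by blast
qed

theorem mainTheorem16:
  fixes \<delta> D :: real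
    and X :: "nat \<Rightarrow> 'a metric" and x :: "nat \<Rightarrow> 'a" and \<Gamma> :: "nat \<Rightarrow> ('a \<Rightarrow> 'a) set"
    and Xinf :: "'b metric" and xinf :: 'b and \<Gamma>inf :: "('b \<Rightarrow> 'b) set"
  assumes "\<delta> \<ge> 0" and "D \<ge> 0"
    and "\<And>n. in_M \<delta> D (X n) (x n) (\<Gamma> n)"
    and "equiv_pGH_converges X x \<Gamma> Xinf xinf \<Gamma>inf"
    and "proper_space Xinf"
    and "isom_subgroup Xinf \<Gamma>inf"
    and "closed_subgroup Xinf \<Gamma>inf"
  shows "\<forall>r R. 0 < r \<and> r \<le> R \<longrightarrow>
           (SUP n. Pack_in (X n) (QC_Hull (X n) (limit_set (X n) (x n) (\<Gamma> n))) R r) < \<infinity>"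
proof (intro allI impI)
  fix r R :: real assume rR: "0 < r \<and> r \<le> R"
  have xm: "x n \<in> mspace (X n)" for n
    using assms(3)[of n] QC_Hull_subset_mspace[of "X n"] unfolding in_M_def by blast
  obtain N C where "C < \<infinity>" "\<And>n. n \<ge> N \<Longrightarrow> Pack (X n) (mcball_of (X n) (x n) (R + D)) r \<le> C"
    using equiv_pGH_converges_Pack_mcball_eventually_bounded[OF assms(4,5) xm] rR by blast
  moreover have "Pack (X n) (mcball_of (X n) (x n) (R + D)) r < \<infinity>" for n
    using assms(3)[of n] xm rR by (intro Pack_compactin_finite) (auto simp: in_M_def proper_space_def)
  ultimately have "(SUP n. Pack (X n) (mcball_of (X n) (x n) (R + D)) r) < \<infinity>"
    by (intro SUP_enat_finite_if_eventually_bounded)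
  moreover have "Pack_in (X n) (QC_Hull (X n) (limit_set (X n) (x n) (\<Gamma> n))) R r
      \<le> Pack (X n) (mcball_of (X n) (x n) (R + D)) r" for n
    using assms(3)[of n] rR by (intro Pack_in_QC_Hull_le_Pack_mcball) (auto simp: in_M_def)
  ultimately show "(SUP n. Pack_in (X n) (QC_Hull (X n) (limit_set (X n) (x n) (\<Gamma> n))) R r) < \<infinity>"
    by (meson SUP_mono le_less_trans)
qed

end
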